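(* Let $\chi\in\sum_{1\leq s\leq r-1}\mathcal B\otimes\land^sW\otimes\land^{r-s}W$ for some $r\geq3$. If $\alpha(\chi)+\beta(\chi)=\gamma(\chi)+\delta(\chi)$, then $\chi=\sum_I b_I(S_I-w_I-w'_I)$ for suitable $b_I\in\mathcal B$, where the sum runs over strictly increasing sequences $I=(i_1<i_2<\cdots<i_r)$ of indices.
   Context: $\mathcal B$ is a graded commutative algebra over $\mathbb Q$ and $W$ a graded rational vector space concentrated in odd degrees with basis $\{w_i\}$ indexed by a totally ordered set. In $\mathcal B\otimes\land W\otimes\land W$ write $w=1\otimes w\otimes 1$, $w'=1\otimes1\otimes w$, and in $\mathcal B\otimes\land W\otimes\land W\otimes\land W$ write $w,w',w''$ for $w$ in the first, second, third copy. Define algebra maps $\alpha,\beta,\gamma,\delta\colon\mathcal B\otimes\land W\otimes\land W\to\mathcal B\otimes\land W\otimes\land W\otimes\land W$, each the identity on $\mathcal B$, by: $\alpha(w)=w,\ \alpha(w')=w'$; $\beta(w)=w+w',\ \beta(w')=w''$; $\gamma(w)=w,\ \gamma(w')=w'+w''$; $\delta(w)=w',\ \delta(w')=w''$. For $I=(i_1,\dots,i_r)$ write $w_I=w_{i_1}\cdots w_{i_r}$, $w'_I=w'_{i_1}\cdots w'_{i_r}$, and $S_I=(w_{i_1}+w'_{i_1})\cdots(w_{i_r}+w'_{i_r})$. *)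

theory Defs
  imports Main "HOL-Library.Product_Lexorder"
begin

(* Exterior algebra on a totally ordered set of odd generators 'g, with
   integer coefficients. An element is a function from monomials (finite
   sets of generators, read as the product of the generators in increasing
   order) to coefficients. *)

type_synonym 'g ext = "'g set \<Rightarrow> int"

definition ext_supp :: "('g set \<Rightarrow> 'a::zero) \<Rightarrow> 'g set set" where
  "ext_supp x = {A. x A \<noteq> 0}"

(* w_A * w_B = ext_sign A B * w_(A Un B)  (generators anticommute, square zero) *)
definition ext_sign :: "'g::linorder set \<Rightarrow> 'g set \<Rightarrow> int" where
  "ext_sign A B = (if A \<inter> B = {} then (-1) ^ card {(a,b). a \<in> A \<and> b \<in> B \<and> b < a} else 0)"

definition ext_mult :: "'g::linorder ext \<Rightarrow> 'g ext \<Rightarrow> 'g ext" where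
  "ext_mult x y = (\<lambda>N. \<Sum>p \<in> ext_supp x \<times> ext_supp y.
      if fst p \<union> snd p = N then x (fst p) * y (snd p) * ext_sign (fst p) (snd p) else 0)"

definition ext_add :: "'g ext \<Rightarrow> 'g ext \<Rightarrow> 'g ext" where
  "ext_add x y = (\<lambda>N. x N + y N)"

definition ext_one :: "'g ext" where
  "ext_one = (\<lambda>N. if N = {} then 1 else 0)"

definition ext_gen :: "'g \<Rightarrow> 'g ext" where
  "ext_gen g = (\<lambda>N. if N = {g} then 1 else 0)"

definition ext_prod_list :: "'g::linorder ext list \<Rightarrow> 'g ext" where
  "ext_prod_list xs = foldr ext_mult xs ext_one"

(* image of the monomial M under the algebra map sending each generator g to sigma g *)
definition ext_subst :: "('g::linorder \<Rightarrow> 'h::linorder ext) \<Rightarrow> 'g set \<Rightarrow> 'h ext" where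
  "ext_subst \<sigma> M = ext_prod_list (map \<sigma> (sorted_list_of_set M))"

(* Elements of B (x) Lambda(generators): coefficient (in B) of each monomial.
   An algebra map which is the identity on B is left B-linear, hence determined
   by its values on monomials. *)
definition ext_map :: "('g::linorder \<Rightarrow> 'h::linorder ext) \<Rightarrow> ('g set \<Rightarrow> 'b::ring_1) \<Rightarrow> ('h set \<Rightarrow> 'b)" where
  "ext_map \<sigma> \<chi> = (\<lambda>N. \<Sum>M \<in> ext_supp \<chi>. \<chi> M * of_int (ext_subst \<sigma> M N))"

(* Generators of B (x) LW (x) LW (x) LW: (0,i) = w_i, (1,i) = w'_i, (2,i) = w''_i.
   Lexicographic order: a monomial M is w_J w'_K w''_L with J, K, L increasing. *)

definition sig_alpha :: "nat \<times> 'i \<Rightarrow> (nat \<times> 'i) ext" where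
  "sig_alpha g = (if fst g = 0 then ext_gen (0, snd g) else ext_gen (1, snd g))"

definition sig_beta :: "nat \<times> 'i \<Rightarrow> (nat \<times> 'i) ext" where
  "sig_beta g = (if fst g = 0 then ext_add (ext_gen (0, snd g)) (ext_gen (1, snd g))
                 else ext_gen (2, snd g))"

definition sig_gamma :: "nat \<times> 'i \<Rightarrow> (nat \<times> 'i) ext" where
  "sig_gamma g = (if fst g = 0 then ext_gen (0, snd g)
                  else ext_add (ext_gen (1, snd g)) (ext_gen (2, snd g)))"

definition sig_delta :: "nat \<times> 'i \<Rightarrow> (nat \<times> 'i) ext" where
  "sig_delta g = (if fst g = 0 then ext_gen (1, snd g) else ext_gen (2, snd g))"

definition alpha_map :: "((nat \<times> 'i::linorder) set \<Rightarrow> 'b::ring_1) \<Rightarrow> ((nat \<times> 'i) set \<Rightarrow> 'b)" where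
  "alpha_map = ext_map sig_alpha"
definition beta_map :: "((nat \<times> 'i::linorder) set \<Rightarrow> 'b::ring_1) \<Rightarrow> ((nat \<times> 'i) set \<Rightarrow> 'b)" where
  "beta_map = ext_map sig_beta"
definition gamma_map :: "((nat \<times> 'i::linorder) set \<Rightarrow> 'b::ring_1) \<Rightarrow> ((nat \<times> 'i) set \<Rightarrow> 'b)" where
  "gamma_map = ext_map sig_gamma"
definition delta_map :: "((nat \<times> 'i::linorder) set \<Rightarrow> 'b::ring_1) \<Rightarrow> ((nat \<times> 'i) set \<Rightarrow> 'b)" where
  "delta_map = ext_map sig_delta"

(* w_I, w'_I, S_I for a finite set I, read as strictly increasing sequence *)
definition w_mon :: "'i::linorder set \<Rightarrow> (nat \<times> 'i) ext" where
  "w_mon I = (\<lambda>N. if N = (\<lambda>i. (0::nat, i)) ` I then 1 else 0)"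
definition w'_mon :: "'i::linorder set \<Rightarrow> (nat \<times> 'i) ext" where
  "w'_mon I = (\<lambda>N. if N = (\<lambda>i. (1::nat, i)) ` I then 1 else 0)"
definition S_mon :: "'i::linorder set \<Rightarrow> (nat \<times> 'i) ext" where
  "S_mon I = ext_prod_list (map (\<lambda>i. ext_add (ext_gen (0, i)) (ext_gen (1, i)))
                                (sorted_list_of_set I))"

definition SI_minus :: "'i::linorder set \<Rightarrow> (nat \<times> 'i) ext" where
  "SI_minus I = (\<lambda>N. S_mon I N - w_mon I N - w'_mon I N)"

end

theory Submission
  imports Defs
begin

(* Write chi = sum of c(J,K) w_J w'_K; by the bidegree hypothesis
   J and K are nonempty with |J| + |K| = r. For nonempty X, Y, Z the coefficient of
   w_X w'_Y w''_Z in alpha(chi) and delta(chi) is zero (no w'', resp. no w), while in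
   beta(chi) and gamma(chi) it is c(X u Y, Z) eps(X,Y) and c(X, Y u Z) eps(Y,Z), where
   eps is the sign of the shuffle of two index sets. So the hypothesis gives the cocycle
   relation c(X u Y, Z) eps(X,Y) = c(X, Y u Z) eps(Y,Z). From it, d(J,K) = c(J,K) eps(J,K)
   vanishes for overlapping J, K and, since r >= 3, depends only on I = J u K; calling
   this value b_I, we get c(J,K) = b_(J u K) eps(J,K). Since S_I - w_I - w'_I is exactly
   the sum of eps(J,K) w_J w'_K over the splittings I = J u K into nonempty parts, chi is
   the sum of b_I (S_I - w_I - w'_I). *)

abbreviation layer :: "nat \<Rightarrow> (nat \<times> 'i) set \<Rightarrow> 'i set" where
  "layer a N \<equiv> {i. (a, i) \<in> N}"

lemma ext_supp_mult_finite: "finite (ext_supp (ext_mult x y))"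
proof (cases "finite (ext_supp x \<times> ext_supp y)")
  case True
  have "ext_supp (ext_mult x y) \<subseteq> (\<lambda>p. fst p \<union> snd p) ` (ext_supp x \<times> ext_supp y)"
  proof
    fix N assume "N \<in> ext_supp (ext_mult x y)"
    hence "(\<Sum>p \<in> ext_supp x \<times> ext_supp y. if fst p \<union> snd p = N
             then x (fst p) * y (snd p) * ext_sign (fst p) (snd p) else 0) \<noteq> 0"
      by (simp add: ext_supp_def ext_mult_def)
    hence "\<exists>p \<in> ext_supp x \<times> ext_supp y. fst p \<union> snd p = N"
      by (rule contrapos_np) (simp add: sum.neutral)
    thus "N \<in> (\<lambda>p. fst p \<union> snd p) ` (ext_supp x \<times> ext_supp y)" by blast
  qed
  thus ?thesis using True finite_subset by blast
next
  case False
  hence "ext_mult x y = (\<lambda>N. 0)" unfolding ext_mult_def by (intro ext sum.infinite)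
  thus ?thesis by (simp add: ext_supp_def)
qed

lemma ext_supp_foldr_finite: "finite (ext_supp Y) \<Longrightarrow> finite (ext_supp (foldr ext_mult xs Y))"
  by (cases xs) (auto simp: ext_supp_mult_finite)

lemma ext_supp_gen: "ext_supp (ext_gen g) = {{g}}"
  by (auto simp: ext_supp_def ext_gen_def)

lemma ext_supp_one: "ext_supp ext_one = {{}}"
  by (auto simp: ext_supp_def ext_one_def)

lemma ext_supp_monomial: "ext_supp (\<lambda>N. if N = T then 1 else 0) \<subseteq> {T}"
  by (auto simp: ext_supp_def)

lemma ext_mult_add_left:
  assumes "finite (ext_supp a)" "finite (ext_supp b)" "finite (ext_supp y)"
  shows "ext_mult (ext_add a b) y N = ext_mult a y N + ext_mult b y N"
proof -
  let ?S = "ext_supp a \<union> ext_supp b"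
  let ?t = "\<lambda>x p. if fst p \<union> snd p = N then x (fst p) * y (snd p) * ext_sign (fst p) (snd p) else 0"
  have enlarge: "ext_mult x y N = (\<Sum>p \<in> ?S \<times> ext_supp y. ?t x p)" if "ext_supp x \<subseteq> ?S" for x
    unfolding ext_mult_def
    by (rule sum.mono_neutral_left) (use assms that in \<open>auto simp: ext_supp_def\<close>)
  have "ext_mult (ext_add a b) y N = (\<Sum>p \<in> ?S \<times> ext_supp y. ?t a p + ?t b p)"
    by (subst enlarge) (auto simp: ext_supp_def ext_add_def algebra_simps intro!: sum.cong)
  also have "\<dots> = ext_mult a y N + ext_mult b y N"
    by (simp add: sum.distrib enlarge)
  finally show ?thesis .
qed

lemma ext_mult_gen:
  assumes "finite (ext_supp y)"
  shows "ext_mult (ext_gen g) y N = (if g \<in> N then y (N - {g}) * ext_sign {g} (N - {g}) else 0)"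
proof -
  have "ext_mult (ext_gen g) y N = (\<Sum>B\<in>ext_supp y. if insert g B = N then y B * ext_sign {g} B else 0)"
  proof -
    have "{{g}} \<times> ext_supp y = Pair {g} ` ext_supp y" by auto
    moreover have "inj_on (Pair {g}) (ext_supp y)" by (simp add: inj_on_def)
    ultimately show ?thesis
      unfolding ext_mult_def ext_supp_gen by (simp add: sum.reindex ext_gen_def cong: if_cong)
  qed
  also have "\<dots> = (\<Sum>B\<in>ext_supp y. if B = N - {g} then (if g \<in> N then y B * ext_sign {g} B else 0) else 0)"
    by (intro sum.cong) (auto simp: ext_sign_def)
  also have "\<dots> = (if g \<in> N then y (N - {g}) * ext_sign {g} (N - {g}) else 0)"
    using assms by (simp add: sum.delta ext_supp_def)
  finally show ?thesis .
qed

lemma ext_sign_overlap: "A \<inter> B \<noteq> {} \<Longrightarrow> ext_sign A B = 0"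
  by (simp add: ext_sign_def)

lemma ext_sign_square: "A \<inter> B = {} \<Longrightarrow> ext_sign A B * ext_sign A B = 1"
  by (simp add: ext_sign_def power_mult_distrib[symmetric])

lemma ext_sign_ordered: "(\<forall>a\<in>A. \<forall>b\<in>B. a < b) \<Longrightarrow> ext_sign A B = 1"
proof -
  assume "\<forall>a\<in>A. \<forall>b\<in>B. a < b"
  hence "A \<inter> B = {}" and no_inv: "{(a,b). a \<in> A \<and> b \<in> B \<and> b < a} = {}" by fastforce+
  thus ?thesis unfolding ext_sign_def no_inv by simp
qed

lemma ext_sign_single: "g \<notin> B \<Longrightarrow> ext_sign {g} B = (-1) ^ card {x\<in>B. x < g}"
proof -
  assume "g \<notin> B"
  have "{(a,b). a \<in> {g} \<and> b \<in> B \<and> b < a} = Pair g ` {x\<in>B. x < g}" by auto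
  moreover have "card (Pair g ` {x\<in>B. x < g}) = card {x\<in>B. x < g}"
    by (rule card_image) (auto simp: inj_on_def)
  ultimately show ?thesis using \<open>g \<notin> B\<close> by (simp add: ext_sign_def)
qed

lemma inversions_finite: "finite A \<Longrightarrow> finite B \<Longrightarrow> finite {(a,b). a \<in> A \<and> b \<in> B \<and> b < a}"
  by (rule finite_subset[of _ "A \<times> B"]) auto

lemma ext_sign_insert_left:
  "j \<notin> A \<Longrightarrow> (\<forall>b\<in>B. j < b) \<Longrightarrow> ext_sign (insert j A) B = ext_sign A B"
proof -
  assume h: "j \<notin> A" "\<forall>b\<in>B. j < b"
  have "{(a,b). a \<in> insert j A \<and> b \<in> B \<and> b < a} = {(a,b). a \<in> A \<and> b \<in> B \<and> b < a}"
    using h by fastforce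
  moreover have "(insert j A \<inter> B = {}) = (A \<inter> B = {})" using h by auto
  ultimately show ?thesis by (simp add: ext_sign_def)
qed

lemma ext_sign_insert_right:
  assumes "finite A" "finite B" "j \<notin> B" "\<forall>a\<in>A. j < a"
  shows "ext_sign A (insert j B) = (-1) ^ card A * ext_sign A B"
proof -
  let ?inv = "{(a,b). a \<in> A \<and> b \<in> B \<and> b < a}"
  have split: "{(a,b). a \<in> A \<and> b \<in> insert j B \<and> b < a} = ?inv \<union> A \<times> {j}"
    using assms by auto
  have "?inv \<inter> A \<times> {j} = {}" using assms by auto
  hence "card {(a,b). a \<in> A \<and> b \<in> insert j B \<and> b < a} = card ?inv + card A"
    unfolding split using assms by (subst card_Un_disjoint) (auto simp: inversions_finite)
  moreover have "(A \<inter> insert j B = {}) = (A \<inter> B = {})" using assms by auto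
  ultimately show ?thesis by (simp add: ext_sign_def power_add mult.commute)
qed

lemma ext_sign_union_left:
  assumes "finite A" "finite B" "finite C" "A \<inter> B = {}"
  shows "ext_sign (A \<union> B) C = ext_sign A C * ext_sign B C"
proof (cases "(A \<union> B) \<inter> C = {}")
  case True
  have "{(a,c). a \<in> A \<union> B \<and> c \<in> C \<and> c < a}
      = {(a,c). a \<in> A \<and> c \<in> C \<and> c < a} \<union> {(a,c). a \<in> B \<and> c \<in> C \<and> c < a}" by auto
  moreover have "card ({(a,c). a \<in> A \<and> c \<in> C \<and> c < a} \<union> {(a,c). a \<in> B \<and> c \<in> C \<and> c < a})
      = card {(a,c). a \<in> A \<and> c \<in> C \<and> c < a} + card {(a,c). a \<in> B \<and> c \<in> C \<and> c < a}"
    by (rule card_Un_disjoint) (use inversions_finite assms in auto)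
  ultimately show ?thesis using True assms unfolding ext_sign_def by (auto simp: power_add)
next
  case False thus ?thesis by (auto simp: ext_sign_def)
qed

lemma ext_sign_union_right:
  assumes "finite A" "finite B" "finite C" "B \<inter> C = {}"
  shows "ext_sign A (B \<union> C) = ext_sign A B * ext_sign A C"
proof (cases "A \<inter> (B \<union> C) = {}")
  case True
  have "{(a,c). a \<in> A \<and> c \<in> B \<union> C \<and> c < a}
      = {(a,c). a \<in> A \<and> c \<in> B \<and> c < a} \<union> {(a,c). a \<in> A \<and> c \<in> C \<and> c < a}" by auto
  moreover have "card ({(a,c). a \<in> A \<and> c \<in> B \<and> c < a} \<union> {(a,c). a \<in> A \<and> c \<in> C \<and> c < a})
      = card {(a,c). a \<in> A \<and> c \<in> B \<and> c < a} + card {(a,c). a \<in> A \<and> c \<in> C \<and> c < a}"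
    by (rule card_Un_disjoint) (use inversions_finite assms in auto)
  ultimately show ?thesis using True assms unfolding ext_sign_def by (auto simp: power_add)
next
  case False thus ?thesis by (auto simp: ext_sign_def)
qed

lemma cancel_unit_sign:
  assumes "x * of_int s = (0::'b::ring_1)" "s * s = 1"
  shows "x = 0"
proof -
  have "x = (x * of_int s) * of_int s" using assms(2) by (simp add: mult.assoc flip: of_int_mult)
  thus ?thesis using assms(1) by simp
qed

lemma foldr_gens_mult:
  assumes "sorted_wrt (<) gs" "finite (ext_supp Y)" "\<forall>g\<in>set gs. \<forall>S\<in>ext_supp Y. \<forall>x\<in>S. g < x"
  shows "foldr ext_mult (map ext_gen gs) Y N = (if set gs \<subseteq> N then Y (N - set gs) else 0)"
  using assms
proof (induction gs arbitrary: N)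
  case Nil thus ?case by simp
next
  case (Cons g gs)
  let ?R = "foldr ext_mult (map ext_gen gs) Y"
  have below: "\<forall>x\<in>set gs. g < x" using Cons.prems(1) by auto
  have IH: "?R N' = (if set gs \<subseteq> N' then Y (N' - set gs) else 0)" for N'
    using Cons.IH Cons.prems by auto
  have fin: "finite (ext_supp ?R)" using ext_supp_foldr_finite Cons.prems(2) by blast
  have "foldr ext_mult (map ext_gen (g#gs)) Y N = ext_mult (ext_gen g) ?R N" by simp
  also have "\<dots> = (if g \<in> N then (if set gs \<subseteq> N - {g} then Y (N - {g} - set gs) else 0)
                       * ext_sign {g} (N - {g}) else 0)"
    by (simp only: ext_mult_gen[OF fin] IH)
  also have "\<dots> = (if set (g#gs) \<subseteq> N then Y (N - set (g#gs)) else 0)"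
  proof (cases "set (g#gs) \<subseteq> N")
    case True
    have rest: "N - {g} - set gs = N - set (g#gs)" by auto
    show ?thesis
    proof (cases "N - set (g#gs) \<in> ext_supp Y")
      case True
      have "g < x" if "x \<in> N - {g}" for x
        using that True Cons.prems(3) below by (cases "x \<in> set gs") auto
      hence "ext_sign {g} (N - {g}) = 1" by (intro ext_sign_ordered) auto
      thus ?thesis using \<open>set (g#gs) \<subseteq> N\<close> rest below by auto
    next
      case False
      thus ?thesis using \<open>set (g#gs) \<subseteq> N\<close> rest by (auto simp: ext_supp_def)
    qed
  next
    case False
    thus ?thesis using below by auto
  qed
  finally show ?case .
qed

lemma foldr_gens_one:
  assumes "sorted_wrt (<) gs"
  shows "foldr ext_mult (map ext_gen gs) ext_one N = (if N = set gs then 1 else 0)"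
proof -
  have "foldr ext_mult (map ext_gen gs) ext_one N = (if set gs \<subseteq> N then ext_one (N - set gs) else 0)"
    using assms by (intro foldr_gens_mult) (auto simp: ext_supp_one)
  thus ?thesis by (auto simp: ext_one_def)
qed

(* N consists of the monomial T together with, over each index of S, generators from
   layer a and/or layer b, and nothing else. *)
abbreviation covers :: "nat \<Rightarrow> nat \<Rightarrow> (nat \<times> 'i) set \<Rightarrow> 'i set \<Rightarrow> (nat \<times> 'i) set \<Rightarrow> bool" where
  "covers a b T S N \<equiv> T \<subseteq> N \<and> (\<forall>x\<in>N - T. fst x = a \<or> fst x = b) \<and> layer a N \<union> layer b N = S"

lemma covers_remove:
  assumes T: "(c, j) \<notin> T" and c: "c = a \<or> c = b" and jS: "j \<notin> S"
    and cN: "(c, j) \<in> N" and other: "(if c = a then (b, j) else (a, j)) \<notin> N"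
  shows "covers a b T S (N - {(c, j)}) = covers a b T (insert j S) N"
proof -
  have "(T \<subseteq> N - {(c, j)}) = (T \<subseteq> N)" using T by auto
  moreover have "(\<forall>x\<in>N - {(c, j)} - T. fst x = a \<or> fst x = b) = (\<forall>x\<in>N - T. fst x = a \<or> fst x = b)"
    using c by auto
  moreover have "layer a (N - {(c, j)}) \<union> layer b (N - {(c, j)}) = (layer a N \<union> layer b N) - {j}"
    using c other by (auto split: if_splits)
  moreover have "((layer a N \<union> layer b N) - {j} = S) = (layer a N \<union> layer b N = insert j S)"
  proof -
    have "j \<in> layer a N \<union> layer b N" using c cN by auto
    thus ?thesis using jS by auto
  qed
  ultimately show ?thesis by (simp only:)
qed

(* One induction step of the expansion of a product of sums (w^a_j + w^b_j), in the
   case where the monomial N contains the generator (a,j): it is pulled to the front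
   without any sign. *)
lemma expand_step_low:
  assumes ab: "a < b" and T: "\<forall>x\<in>T. b < fst x" and jS: "j \<notin> S" and above: "\<forall>x\<in>S. j < x"
    and in_N: "(a, j) \<in> N" "(b, j) \<notin> N"
  defines "N' \<equiv> N - {(a, j)}"
  shows "(if covers a b T S N' then ext_sign (layer a N') (layer b N') else 0) * ext_sign {(a, j)} N'
       = (if covers a b T (insert j S) N then ext_sign (layer a N) (layer b N) else 0)"
proof -
  have aT: "(a, j) \<notin> T" using T ab by force
  have same: "covers a b T S N' = covers a b T (insert j S) N"
    unfolding N'_def using aT jS in_N by (intro covers_remove) auto
  show ?thesis
  proof (cases "covers a b T S N'")
    case True
    have "\<forall>x\<in>N'. (a, j) < x"
    proof
      fix x assume x: "x \<in> N'"
      show "(a, j) < x"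
      proof (cases "x \<in> T")
        case False
        hence "fst x = a \<or> fst x = b" using True x by blast
        moreover have "fst x = a \<Longrightarrow> snd x \<in> S" using True x by (cases x) auto
        ultimately show ?thesis using above ab by (cases x) auto
      qed (use T ab in \<open>cases x, auto\<close>)
    qed
    hence front: "ext_sign {(a, j)} N' = 1" by (intro ext_sign_ordered) auto
    have "layer a N = insert j (layer a N')" "layer b N = layer b N'" "j \<notin> layer a N'"
      using in_N ab unfolding N'_def by auto
    moreover have "\<forall>y\<in>layer b N'. j < y" using True above by auto
    ultimately have "ext_sign (layer a N) (layer b N) = ext_sign (layer a N') (layer b N')"
      by (simp add: ext_sign_insert_left)
    thus ?thesis using True same front by simp
  next
    case False
    hence "\<not> covers a b T (insert j S) N" using same by blast
    with False show ?thesis by (simp only: if_False mult_zero_left)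
  qed
qed

(* The same step when N contains (b,j): moving it past the layer-a generators costs
   the sign (-1)^|layer a N|. *)
lemma expand_step_high:
  assumes ab: "a < b" and T: "\<forall>x\<in>T. b < fst x" and jS: "j \<notin> S" and above: "\<forall>x\<in>S. j < x"
    and S: "finite S" and in_N: "(a, j) \<notin> N" "(b, j) \<in> N"
  defines "N' \<equiv> N - {(b, j)}"
  shows "(if covers a b T S N' then ext_sign (layer a N') (layer b N') else 0) * ext_sign {(b, j)} N'
       = (if covers a b T (insert j S) N then ext_sign (layer a N) (layer b N) else 0)"
proof -
  have bT: "(b, j) \<notin> T" using T by force
  have same: "covers a b T S N' = covers a b T (insert j S) N"
    unfolding N'_def using ab bT jS in_N by (intro covers_remove) auto
  show ?thesis
  proof (cases "covers a b T S N'")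
    case True
    have "{x\<in>N'. x < (b, j)} = Pair a ` layer a N'"
    proof
      show "{x\<in>N'. x < (b, j)} \<subseteq> Pair a ` layer a N'"
      proof
        fix x assume x: "x \<in> {x\<in>N'. x < (b, j)}"
        hence "x \<notin> T" using T by (cases x) auto
        hence "fst x = a \<or> fst x = b" using True x by blast
        moreover have "fst x = b \<Longrightarrow> snd x \<in> S" using True x by (cases x) auto
        moreover have "\<not> (fst x = b \<and> snd x \<in> S)"
        proof
          assume fx: "fst x = b \<and> snd x \<in> S"
          hence "j < snd x" using above by blast
          moreover have "snd x < j" using x fx by (cases x) auto
          ultimately show False by simp
        qed
        ultimately have "fst x = a" by blast
        thus "x \<in> Pair a ` layer a N'" using x by (cases x) auto
      qed
    qed (use ab in auto)
    moreover have "card (Pair a ` layer a N') = card (layer a N')"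
      by (rule card_image) (simp add: inj_on_def)
    moreover have layer_a: "layer a N' = layer a N" using ab unfolding N'_def by auto
    ultimately have front: "ext_sign {(b, j)} N' = (-1) ^ card (layer a N)"
      unfolding N'_def by (simp add: ext_sign_single)
    have "layer b N = insert j (layer b N')" "j \<notin> layer b N'"
      using in_N unfolding N'_def by auto
    moreover have "finite (layer a N)" "finite (layer b N')" "\<forall>y\<in>layer a N. j < y"
      using True S above layer_a by (metis finite_Un, metis finite_Un, auto)
    ultimately have "ext_sign (layer a N) (layer b N) = (-1) ^ card (layer a N) * ext_sign (layer a N') (layer b N')"
      using layer_a by (simp add: ext_sign_insert_right)
    thus ?thesis using True same front by (simp add: mult.commute)
  next
    case False
    hence "\<not> covers a b T (insert j S) N" using same by blast
    with False show ?thesis by (simp only: if_False mult_zero_left)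
  qed
qed

lemma expand_sum_product:
  fixes a b :: nat and T :: "(nat \<times> 'i::linorder) set"
  assumes ab: "a < b" and js: "sorted_wrt (<) js" and T: "\<forall>x\<in>T. b < fst x"
  shows "foldr ext_mult (map (\<lambda>j. ext_add (ext_gen (a, j)) (ext_gen (b, j))) js)
           (\<lambda>N. if N = T then 1 else 0) N
       = (if covers a b T (set js) N then ext_sign (layer a N) (layer b N) else 0)"
  using js
proof (induction js arbitrary: N)
  case Nil
  have "covers a b T {} N = (N = T)" using T ab by force
  moreover have "layer a T = {}" using T ab by force
  ultimately show ?case by (simp add: ext_sign_def)
next
  case (Cons j js)
  let ?R = "foldr ext_mult (map (\<lambda>j. ext_add (ext_gen (a, j)) (ext_gen (b, j))) js)
              (\<lambda>N. if N = T then 1 else 0)"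
  have above: "\<forall>x\<in>set js. j < x" and jS: "j \<notin> set js" using Cons.prems by auto
  have IH: "?R N' = (if covers a b T (set js) N' then ext_sign (layer a N') (layer b N') else 0)" for N'
    using Cons by auto
  have fin: "finite (ext_supp ?R)"
    by (rule ext_supp_foldr_finite) (rule finite_subset[OF ext_supp_monomial], simp)
  have "foldr ext_mult (map (\<lambda>j. ext_add (ext_gen (a, j)) (ext_gen (b, j))) (j # js))
          (\<lambda>N. if N = T then 1 else 0) N
      = ext_mult (ext_add (ext_gen (a, j)) (ext_gen (b, j))) ?R N" by simp
  also have "\<dots> = ext_mult (ext_gen (a, j)) ?R N + ext_mult (ext_gen (b, j)) ?R N"
    by (rule ext_mult_add_left) (simp_all add: ext_supp_gen fin)
  also have "\<dots> = (if (a, j) \<in> N then ?R (N - {(a, j)}) * ext_sign {(a, j)} (N - {(a, j)}) else 0)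
      + (if (b, j) \<in> N then ?R (N - {(b, j)}) * ext_sign {(b, j)} (N - {(b, j)}) else 0)"
    by (simp only: ext_mult_gen[OF fin])
  also have "\<dots> = (if covers a b T (set (j # js)) N then ext_sign (layer a N) (layer b N) else 0)"
  proof -
    consider (low) "(a, j) \<in> N" "(b, j) \<notin> N" | (high) "(a, j) \<notin> N" "(b, j) \<in> N"
      | (both) "(a, j) \<in> N" "(b, j) \<in> N" | (none) "(a, j) \<notin> N" "(b, j) \<notin> N" by blast
    thus ?thesis
    proof cases
      case low
      from expand_step_low[OF ab T jS above this] show ?thesis using low by (simp add: IH)
    next
      case high
      from expand_step_high[OF ab T jS above _ this] show ?thesis using high by (simp add: IH)
    next
      case both
      have "\<not> covers a b T (set js) (N - {(a, j)})" "\<not> covers a b T (set js) (N - {(b, j)})"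
        using both jS ab by auto
      hence "?R (N - {(a, j)}) = 0" "?R (N - {(b, j)}) = 0"
        by (simp_all only: IH if_False)
      moreover have "ext_sign (layer a N) (layer b N) = 0" using both by (intro ext_sign_overlap) auto
      ultimately show ?thesis using both by simp
    next
      case none
      thus ?thesis by auto
    qed
  qed
  finally show ?case .
qed

abbreviation bimon :: "'i set \<Rightarrow> 'i set \<Rightarrow> (nat \<times> 'i) set" where
  "bimon J K \<equiv> Pair 0 ` J \<union> Pair 1 ` K"

abbreviation trimon :: "'i set \<Rightarrow> 'i set \<Rightarrow> 'i set \<Rightarrow> (nat \<times> 'i) set" where
  "trimon X Y Z \<equiv> Pair 0 ` X \<union> Pair 1 ` Y \<union> Pair 2 ` Z"

lemma bimon_layers: "layer 0 (bimon A B) = A" "layer 1 (bimon A B) = B"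
  by auto

lemma bimon_decompose: "fst ` N \<subseteq> {0, 1} \<Longrightarrow> N = bimon (layer 0 N) (layer 1 N)"
  by (auto simp: image_iff)

lemma sorted_layer: "sorted_wrt (<) (map (Pair (s::nat)) (sorted_list_of_set (A::'i::linorder set)))"
  using strict_sorted_list_of_set[of A] by (simp add: sorted_wrt_map)

lemma sorted_two_layers:
  "s < t \<Longrightarrow> sorted_wrt (<) (map (Pair (s::nat)) (sorted_list_of_set (A::'i::linorder set))
                                @ map (Pair t) (sorted_list_of_set B))"
  using sorted_layer[of s A] sorted_layer[of t B] by (simp add: sorted_wrt_append)

lemma sorted_list_bimon:
  assumes "finite J" "finite K"
  shows "sorted_list_of_set (bimon J (K::'i::linorder set))
       = map (Pair 0) (sorted_list_of_set J) @ map (Pair 1) (sorted_list_of_set K)"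
proof (rule strict_sorted_equal)
  show "sorted_wrt (<) (map (Pair (0::nat)) (sorted_list_of_set J) @ map (Pair 1) (sorted_list_of_set K))"
    by (rule sorted_two_layers) simp
qed (use assms in auto)

(* beta(w_J w'_K) = prod_(j in J) (w_j + w'_j) * w''_K, expanded. *)
lemma subst_beta_bimon:
  assumes "finite J" "finite K"
  shows "ext_subst sig_beta (bimon J (K::'i::linorder set)) N =
    (if covers 0 1 (Pair 2 ` K) J N then ext_sign (layer 0 N) (layer 1 N) else 0)"
proof -
  have first: "map sig_beta (map (Pair 0) (sorted_list_of_set J))
             = map (\<lambda>j. ext_add (ext_gen (0, j)) (ext_gen (1, j))) (sorted_list_of_set J)"
    by (simp add: sig_beta_def)
  have second: "map sig_beta (map (Pair 1) (sorted_list_of_set K))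
              = map ext_gen (map (Pair 2) (sorted_list_of_set K))"
    by (simp add: sig_beta_def)
  have inner: "foldr ext_mult (map ext_gen (map (Pair (2::nat)) (sorted_list_of_set K))) ext_one
      = (\<lambda>N. if N = Pair 2 ` K then 1 else 0)"
    using foldr_gens_one[OF sorted_layer[of 2 K]] assms by (intro ext) simp
  show ?thesis
    unfolding ext_subst_def ext_prod_list_def sorted_list_bimon[OF assms] map_append foldr_append
      first second inner
    by (subst expand_sum_product) (auto simp: assms)
qed

(* gamma(w_J w'_K) = w_J * prod_(k in K) (w'_k + w''_k), expanded. *)
lemma subst_gamma_bimon:
  assumes "finite J" "finite K"
  shows "ext_subst sig_gamma (bimon J (K::'i::linorder set)) N =
    (if Pair 0 ` J \<subseteq> N \<and> covers 1 2 {} K (N - Pair 0 ` J) then ext_sign (layer 1 N) (layer 2 N) else 0)"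
proof -
  have first: "map sig_gamma (map (Pair 0) (sorted_list_of_set J))
             = map ext_gen (map (Pair 0) (sorted_list_of_set J))"
    by (simp add: sig_gamma_def)
  have second: "map sig_gamma (map (Pair 1) (sorted_list_of_set K))
              = map (\<lambda>j. ext_add (ext_gen (1, j)) (ext_gen (2, j))) (sorted_list_of_set K)"
    by (simp add: sig_gamma_def)
  let ?G = "foldr ext_mult (map (\<lambda>j. ext_add (ext_gen (1, j)) (ext_gen (2::nat, j))) (sorted_list_of_set K)) ext_one"
  have G: "?G N' = (if covers 1 2 {} K N' then ext_sign (layer 1 N') (layer 2 N') else 0)" for N'
    unfolding ext_one_def using expand_sum_product[of 1 2 "sorted_list_of_set K" "{}"] assms by simp
  have outer: "foldr ext_mult (map ext_gen (map (Pair 0) (sorted_list_of_set J))) ?G N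
      = (if Pair 0 ` J \<subseteq> N then ?G (N - Pair 0 ` J) else 0)"
  proof -
    have "g < x" if "g \<in> set (map (Pair 0) (sorted_list_of_set J))" "S \<in> ext_supp ?G" "x \<in> S" for g S x
    proof -
      have "?G S \<noteq> 0" using that(2) by (simp add: ext_supp_def)
      hence "fst x = 1 \<or> fst x = 2" using G[of S] that(3) by (auto split: if_splits)
      thus "g < x" using that(1) by (cases x) auto
    qed
    moreover have "finite (ext_supp ?G)" by (rule ext_supp_foldr_finite) (simp add: ext_supp_one)
    ultimately show ?thesis using assms by (subst foldr_gens_mult[OF sorted_layer]) auto
  qed
  have layers: "layer 1 (N - Pair 0 ` J) = layer 1 N" "layer 2 (N - Pair 0 ` J) = layer 2 N"
    by auto
  show ?thesis
    unfolding ext_subst_def ext_prod_list_def sorted_list_bimon[OF assms] map_append foldr_append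
      first second outer G layers by (simp only: if_if_eq_conj)
qed

lemma trimon_layers_outside:
  assumes "a \<noteq> c" "b \<noteq> c" and abc: "\<And>e::nat. e \<le> 2 \<Longrightarrow> e = a \<or> e = b \<or> e = c"
  shows "(\<forall>x\<in>trimon X Y Z - Pair c ` C. fst x = a \<or> fst x = b) = (layer c (trimon X Y Z) \<subseteq> C)"
proof
  assume h: "\<forall>x\<in>trimon X Y Z - Pair c ` C. fst x = a \<or> fst x = b"
  show "layer c (trimon X Y Z) \<subseteq> C"
  proof
    fix i assume i: "i \<in> layer c (trimon X Y Z)"
    show "i \<in> C"
    proof (rule ccontr)
      assume "i \<notin> C"
      hence "(c, i) \<in> trimon X Y Z - Pair c ` C" using i by auto
      from h[rule_format, OF this] show False using assms(1,2) by simp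
    qed
  qed
next
  assume C: "layer c (trimon X Y Z) \<subseteq> C"
  show "\<forall>x\<in>trimon X Y Z - Pair c ` C. fst x = a \<or> fst x = b"
  proof
    fix x assume x: "x \<in> trimon X Y Z - Pair c ` C"
    have "fst x \<le> 2" using x by auto
    moreover have "fst x \<noteq> c" using x C by (cases x) auto
    ultimately show "fst x = a \<or> fst x = b" using abc by blast
  qed
qed

lemma eval_beta:
  assumes "finite J" "finite K"
  shows "ext_subst sig_beta (bimon J (K::'i::linorder set)) (trimon X Y Z)
     = (if J = X \<union> Y \<and> K = Z then ext_sign X Y else 0)"
proof -
  have layers: "layer 0 (trimon X Y Z) = X" "layer 1 (trimon X Y Z) = Y" "layer 2 (trimon X Y Z) = Z"
    by auto
  have T: "(Pair 2 ` K \<subseteq> trimon X Y Z) = (K \<subseteq> Z)" by auto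
  have rest: "(\<forall>x\<in>trimon X Y Z - Pair 2 ` K. fst x = 0 \<or> fst x = 1) = (layer 2 (trimon X Y Z) \<subseteq> K)"
    by (rule trimon_layers_outside) auto
  have "covers 0 1 (Pair 2 ` K) J (trimon X Y Z) = (K \<subseteq> Z \<and> Z \<subseteq> K \<and> X \<union> Y = J)"
    by (simp only: T rest layers)
  also have "\<dots> = (J = X \<union> Y \<and> K = Z)" by auto
  finally show ?thesis by (simp only: subst_beta_bimon[OF assms] layers)
qed

lemma eval_gamma:
  assumes "finite J" "finite K"
  shows "ext_subst sig_gamma (bimon J (K::'i::linorder set)) (trimon X Y Z)
     = (if J = X \<and> K = Y \<union> Z then ext_sign Y Z else 0)"
proof -
  have layers: "layer 1 (trimon X Y Z) = Y" "layer 2 (trimon X Y Z) = Z"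
    "layer 1 (trimon X Y Z - Pair 0 ` J) = Y" "layer 2 (trimon X Y Z - Pair 0 ` J) = Z"
    "layer 0 (trimon X Y Z) = X"
    by auto
  have T: "(Pair 0 ` J \<subseteq> trimon X Y Z) = (J \<subseteq> X)" by auto
  have rest: "(\<forall>x\<in>trimon X Y Z - Pair 0 ` J. fst x = 1 \<or> fst x = 2) = (layer 0 (trimon X Y Z) \<subseteq> J)"
    by (rule trimon_layers_outside) auto
  have "(Pair 0 ` J \<subseteq> trimon X Y Z \<and> covers 1 2 {} K (trimon X Y Z - Pair 0 ` J))
      = (J \<subseteq> X \<and> X \<subseteq> J \<and> Y \<union> Z = K)"
    by (simp only: T rest layers Diff_empty empty_subsetI simp_thms)
  also have "\<dots> = (J = X \<and> K = Y \<union> Z)" by auto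
  finally show ?thesis by (simp only: subst_gamma_bimon[OF assms] layers)
qed

(* alpha(w_J w'_K) involves no w'', so it misses w_X w'_Y w''_Z when Z is nonempty. *)
lemma eval_alpha:
  assumes "finite J" "finite K" "Z \<noteq> {}"
  shows "ext_subst sig_alpha (bimon J (K::'i::linorder set)) (trimon X Y Z) = 0"
proof -
  have gens: "map sig_alpha (sorted_list_of_set (bimon J K)) = map ext_gen (sorted_list_of_set (bimon J K))"
  proof (rule map_cong[OF refl])
    fix x assume "x \<in> set (sorted_list_of_set (bimon J K))"
    hence "x \<in> bimon J K" using assms by simp
    thus "sig_alpha x = ext_gen x" by (auto simp: sig_alpha_def)
  qed
  have "trimon X Y Z \<noteq> set (sorted_list_of_set (bimon J K))"
  proof
    assume eq: "trimon X Y Z = set (sorted_list_of_set (bimon J K))"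
    obtain z where "z \<in> Z" using assms(3) by blast
    hence "(2, z) \<in> set (sorted_list_of_set (bimon J K))" using eq by blast
    hence "(2, z) \<in> bimon J K" using assms(1,2) by simp
    thus False by auto
  qed
  thus ?thesis
    unfolding ext_subst_def ext_prod_list_def gens foldr_gens_one[OF strict_sorted_list_of_set] by simp
qed

(* delta(w_J w'_K) involves no w, so it misses w_X w'_Y w''_Z when X is nonempty. *)
lemma eval_delta:
  assumes "finite J" "finite K" "X \<noteq> {}"
  shows "ext_subst sig_delta (bimon J (K::'i::linorder set)) (trimon X Y Z) = 0"
proof -
  let ?gs = "map (Pair (1::nat)) (sorted_list_of_set J) @ map (Pair 2) (sorted_list_of_set K)"
  have gens: "map sig_delta (map (Pair 0) (sorted_list_of_set J) @ map (Pair 1) (sorted_list_of_set K))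
      = map ext_gen ?gs"
    by (simp add: sig_delta_def)
  have "trimon X Y Z \<noteq> set ?gs"
  proof
    assume eq: "trimon X Y Z = set ?gs"
    obtain x where "x \<in> X" using assms(3) by blast
    hence "(0, x) \<in> set ?gs" using eq by blast
    thus False by auto
  qed
  moreover have "foldr ext_mult (map ext_gen ?gs) ext_one N = (if N = set ?gs then 1 else 0)" for N
    by (rule foldr_gens_one) (rule sorted_two_layers, simp)
  ultimately show ?thesis
    unfolding ext_subst_def ext_prod_list_def sorted_list_bimon[OF assms(1,2)] gens by simp
qed

lemma S_mon_eval:
  assumes "finite I"
  shows "S_mon I N = (if covers 0 1 {} I N then ext_sign (layer 0 N) (layer 1 N) else 0)"
proof -
  have "set (sorted_list_of_set I) = I" using assms by simp
  thus ?thesis unfolding S_mon_def ext_prod_list_def ext_one_def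
    by (subst expand_sum_product) (auto simp: strict_sorted_list_of_set)
qed

definition signed_coeff :: "('i::linorder set \<Rightarrow> 'i set \<Rightarrow> 'b::ring_1) \<Rightarrow> 'i set \<Rightarrow> 'i set \<Rightarrow> 'b" where
  "signed_coeff c J K = c J K * of_int (ext_sign J K)"

definition cocycle_rep :: "('i::linorder set \<Rightarrow> 'i set \<Rightarrow> 'b::ring_1) \<Rightarrow> nat \<Rightarrow> 'i set \<Rightarrow> 'b" where
  "cocycle_rep c r I =
     (if finite I \<and> card I = r then signed_coeff c {Min I} (I - {Min I}) else 0)"

lemma cocycle_rep_nonzero:
  assumes "cocycle_rep c r I \<noteq> 0"
  shows "finite I \<and> card I = r \<and> c {Min I} (I - {Min I}) \<noteq> 0"
  using assms by (auto simp: cocycle_rep_def signed_coeff_def split: if_splits)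

locale shuffle_cocycle =
  fixes c :: "'i::linorder set \<Rightarrow> 'i set \<Rightarrow> 'b::ring_1" and r :: nat
  assumes r3: "3 \<le> r"
    and cocycle: "\<And>X Y Z. finite X \<Longrightarrow> finite Y \<Longrightarrow> finite Z \<Longrightarrow> X \<noteq> {} \<Longrightarrow> Y \<noteq> {} \<Longrightarrow> Z \<noteq> {} \<Longrightarrow>
        c (X \<union> Y) Z * of_int (ext_sign X Y) = c X (Y \<union> Z) * of_int (ext_sign Y Z)"
    and support: "\<And>J K. c J K \<noteq> 0 \<Longrightarrow> finite J \<and> finite K \<and> J \<noteq> {} \<and> K \<noteq> {} \<and> card J + card K = r"
begin

(* Coefficients at overlapping J and K vanish: split off a common element i and use the
   relation with a block {i}, where one of the two signs is zero and the other a unit. *)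
lemma coeff_overlap:
  assumes "J \<inter> K \<noteq> {}"
  shows "c J K = 0"
proof (rule ccontr)
  assume nz: "c J K \<noteq> 0"
  hence fJ: "finite J" and fK: "finite K" and nJ: "J \<noteq> {}" and nK: "K \<noteq> {}"
    and cr: "card J + card K = r"
    using support by blast+
  obtain i where iJ: "i \<in> J" and iK: "i \<in> K" using assms by blast
  show False
  proof (cases "K = {i}")
    case False
    hence ne: "K - {i} \<noteq> {}" using iK by blast
    have "c (J \<union> {i}) (K - {i}) * of_int (ext_sign J {i})
        = c J ({i} \<union> (K - {i})) * of_int (ext_sign {i} (K - {i}))"
      using cocycle[of J "{i}" "K - {i}"] fJ fK nJ ne by simp
    moreover have "ext_sign J {i} = 0" using iJ by (intro ext_sign_overlap) auto
    moreover have "{i} \<union> (K - {i}) = K" using iK by blast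
    ultimately have "c J K * of_int (ext_sign {i} (K - {i})) = 0" by simp
    moreover have "ext_sign {i} (K - {i}) * ext_sign {i} (K - {i}) = 1" by (intro ext_sign_square) auto
    ultimately have "c J K = 0" by (rule cancel_unit_sign)
    thus False using nz by simp
  next
    case True
    hence "card J \<ge> 2" using cr r3 by simp
    have ne: "J - {i} \<noteq> {}"
    proof
      assume "J - {i} = {}"
      hence "J = {i}" using iJ by blast
      thus False using \<open>card J \<ge> 2\<close> by simp
    qed
    have "c ((J - {i}) \<union> {i}) {i} * of_int (ext_sign (J - {i}) {i})
        = c (J - {i}) ({i} \<union> {i}) * of_int (ext_sign {i} {i})"
      using cocycle[of "J - {i}" "{i}" "{i}"] fJ ne by simp
    moreover have "ext_sign {i} {i} = 0" by (intro ext_sign_overlap) auto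
    moreover have "(J - {i}) \<union> {i} = J" using iJ by blast
    ultimately have "c J {i} * of_int (ext_sign (J - {i}) {i}) = 0" by simp
    moreover have "ext_sign (J - {i}) {i} * ext_sign (J - {i}) {i} = 1" by (intro ext_sign_square) auto
    ultimately have "c J {i} = 0" by (rule cancel_unit_sign)
    thus False using nz True by simp
  qed
qed

lemma signed_coeff_move:
  assumes f: "finite X" "finite Y" "finite Z" and n: "X \<noteq> {}" "Y \<noteq> {}" "Z \<noteq> {}"
    and dis: "X \<inter> Y = {}" "Y \<inter> Z = {}"
  shows "signed_coeff c (X \<union> Y) Z = signed_coeff c X (Y \<union> Z)"
proof -
  define sXY sXZ sYZ where "sXY = ext_sign X Y" and "sXZ = ext_sign X Z" and "sYZ = ext_sign Y Z"
  have q1: "sXY * sXY = 1" unfolding sXY_def using dis(1) by (rule ext_sign_square)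
  have q2: "sYZ * sYZ = 1" unfolding sYZ_def using dis(2) by (rule ext_sign_square)
  have e1: "ext_sign (X \<union> Y) Z = sXZ * sYZ"
    unfolding sXZ_def sYZ_def using f dis(1) by (rule ext_sign_union_left)
  have e2: "ext_sign X (Y \<union> Z) = sXY * sXZ"
    unfolding sXY_def sXZ_def using f dis(2) by (rule ext_sign_union_right)
  have h: "c (X \<union> Y) Z * of_int sXY = c X (Y \<union> Z) * of_int sYZ"
    unfolding sXY_def sYZ_def using f n by (rule cocycle)
  have "signed_coeff c (X \<union> Y) Z = c (X \<union> Y) Z * of_int ((sXY * sXY) * (sXZ * sYZ))"
    unfolding signed_coeff_def e1 q1 by simp
  also have "\<dots> = (c (X \<union> Y) Z * of_int sXY) * of_int (sXY * sXZ * sYZ)"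
    by (simp add: mult.assoc)
  also have "\<dots> = (c X (Y \<union> Z) * of_int sYZ) * of_int (sXY * sXZ * sYZ)" by (simp only: h)
  also have "\<dots> = c X (Y \<union> Z) * of_int (sYZ * (sXY * sXZ * sYZ))"
    by (simp only: mult.assoc of_int_mult)
  also have "\<dots> = c X (Y \<union> Z) * of_int ((sYZ * sYZ) * (sXY * sXZ))"
    by (simp only: ac_simps)
  also have "\<dots> = signed_coeff c X (Y \<union> Z)" unfolding signed_coeff_def e2 q2 by simp
  finally show ?thesis .
qed

lemma signed_coeff_shrink:
  assumes I: "finite I" and A: "A \<subseteq> I" "A \<noteq> I" and x: "x \<in> A"
  shows "signed_coeff c A (I - A) = signed_coeff c {x} (I - {x})"
proof (cases "A = {x}")
  case False
  have "signed_coeff c ({x} \<union> (A - {x})) (I - A) = signed_coeff c {x} ((A - {x}) \<union> (I - A))"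
    by (rule signed_coeff_move) (use I A x False finite_subset in auto)
  moreover have "{x} \<union> (A - {x}) = A" "(A - {x}) \<union> (I - A) = I - {x}" using A x by blast+
  ultimately show ?thesis by simp
qed simp

(* When |I| \<ge> 3 the singleton splittings of I all give the same value, since {x} and {y}
   both lie in the proper subset {x, y}. *)
lemma signed_coeff_singletons:
  assumes I: "finite I" "card I \<ge> 3" and xy: "x \<in> I" "y \<in> I"
  shows "signed_coeff c {x} (I - {x}) = signed_coeff c {y} (I - {y})"
proof -
  have "{x, y} \<noteq> I"
  proof
    assume "{x, y} = I"
    moreover have "card {x, y} \<le> 2" by (cases "x = y") auto
    ultimately show False using I by simp
  qed
  hence "signed_coeff c {x, y} (I - {x, y}) = signed_coeff c {x} (I - {x})"
    and "signed_coeff c {x, y} (I - {x, y}) = signed_coeff c {y} (I - {y})"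
    using I xy by (auto intro!: signed_coeff_shrink)
  thus ?thesis by simp
qed

lemma coeff_split:
  assumes "finite J" "finite K" "J \<noteq> {}" "K \<noteq> {}" "J \<inter> K = {}" "card (J \<union> K) = r"
  shows "c J K = cocycle_rep c r (J \<union> K) * of_int (ext_sign J K)"
proof -
  let ?I = "J \<union> K"
  obtain x where x: "x \<in> J" using assms(3) by blast
  have "Min ?I \<in> ?I" using assms(1-3) by (intro Min_in) auto
  have "?I - J = K" using assms(5) by blast
  hence "signed_coeff c J K = signed_coeff c J (?I - J)" by simp
  also have "\<dots> = signed_coeff c {x} (?I - {x})"
    using assms x by (intro signed_coeff_shrink) auto
  also have "\<dots> = signed_coeff c {Min ?I} (?I - {Min ?I})"
    using assms r3 x \<open>Min ?I \<in> ?I\<close> by (intro signed_coeff_singletons) auto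
  also have "\<dots> = cocycle_rep c r ?I" using assms(1,2,6) by (simp add: cocycle_rep_def)
  finally have d: "signed_coeff c J K = cocycle_rep c r ?I" .
  have "c J K = c J K * of_int (ext_sign J K * ext_sign J K)"
    using ext_sign_square[OF assms(5)] by simp
  also have "\<dots> = signed_coeff c J K * of_int (ext_sign J K)"
    unfolding signed_coeff_def by (simp add: mult.assoc)
  finally show ?thesis using d by simp
qed

lemma coeff_formula:
  assumes "J \<noteq> {}" "K \<noteq> {}"
  shows "c J K = cocycle_rep c r (J \<union> K) * of_int (ext_sign J K)"
proof (cases "J \<inter> K = {}")
  case False
  thus ?thesis by (simp add: coeff_overlap ext_sign_overlap)
next
  case disjoint: True
  show ?thesis
  proof (cases "finite J \<and> finite K \<and> card (J \<union> K) = r")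
    case True
    thus ?thesis using coeff_split assms disjoint by blast
  next
    case False
    have "c J K = 0"
      using support[of J K] False disjoint by (auto simp: card_Un_disjoint)
    moreover have "cocycle_rep c r (J \<union> K) = 0" using False by (auto simp: cocycle_rep_def)
    ultimately show ?thesis by simp
  qed
qed

end

definition bicoeff :: "((nat \<times> 'i) set \<Rightarrow> 'b) \<Rightarrow> 'i set \<Rightarrow> 'i set \<Rightarrow> 'b" where
  "bicoeff \<chi> J K = \<chi> (bimon J K)"

lemma bidegree_support:
  assumes bideg: "\<forall>M \<in> ext_supp \<chi>. finite M \<and> fst ` M \<subseteq> {0, 1} \<and> card M = r
                 \<and> 1 \<le> card {g \<in> M. fst g = 0} \<and> card {g \<in> M. fst g = 0} \<le> r - 1"
    and nz: "\<chi> N \<noteq> 0"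
  shows "fst ` N \<subseteq> {0, 1} \<and> finite (layer 0 N) \<and> finite (layer 1 N)
       \<and> layer 0 N \<noteq> {} \<and> layer 1 N \<noteq> {} \<and> card (layer 0 N) + card (layer 1 N) = r"
proof -
  let ?J = "layer 0 N" and ?K = "layer 1 N"
  have N: "finite N" "fst ` N \<subseteq> {0, 1}" "card N = r"
    and low: "1 \<le> card {g \<in> N. fst g = 0}" "card {g \<in> N. fst g = 0} \<le> r - 1"
    using bideg nz by (auto simp: ext_supp_def)
  have "layer a N \<subseteq> snd ` N" for a :: nat by force
  hence fin: "finite ?J" "finite ?K" using N(1) finite_subset by blast+
  have card_layer: "card (Pair a ` layer a N) = card (layer a N)" for a :: nat
    by (rule card_image) (simp add: inj_on_def)
  have "{g \<in> N. fst g = 0} = Pair 0 ` ?J" by force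
  hence J: "1 \<le> card ?J" "card ?J \<le> r - 1" using low card_layer by simp_all
  have "card N = card (Pair (0::nat) ` ?J) + card (Pair (1::nat) ` ?K)"
    by (subst bimon_decompose[OF N(2)], rule card_Un_disjoint) (use fin in auto)
  hence sum: "card ?J + card ?K = r" using N(3) card_layer by simp
  hence "card ?J \<noteq> 0" "card ?K \<noteq> 0" using J by linarith+
  hence "?J \<noteq> {}" "?K \<noteq> {}" by (metis card.empty)+
  thus ?thesis using N(2) fin sum by blast
qed

lemma bidegree_expansion:
  assumes bideg: "\<forall>M \<in> ext_supp \<chi>. finite M \<and> fst ` M \<subseteq> {0, 1} \<and> card M = r
                 \<and> 1 \<le> card {g \<in> M. fst g = 0} \<and> card {g \<in> M. fst g = 0} \<le> r - 1"
  shows "\<chi> N = (if fst ` N \<subseteq> {0, 1} \<and> layer 0 N \<noteq> {} \<and> layer 1 N \<noteq> {}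
                  then bicoeff \<chi> (layer 0 N) (layer 1 N) else 0)"
proof -
  have recompose: "fst ` N \<subseteq> {0, 1} \<Longrightarrow> bicoeff \<chi> (layer 0 N) (layer 1 N) = \<chi> N"
    unfolding bicoeff_def by (drule bimon_decompose) simp
  show ?thesis
  proof (cases "\<chi> N = 0")
    case True
    thus ?thesis using recompose by simp
  next
    case False
    thus ?thesis using bidegree_support[OF bideg False] recompose by simp
  qed
qed

lemma bicoeff_support:
  assumes bideg: "\<forall>M \<in> ext_supp \<chi>. finite M \<and> fst ` M \<subseteq> {0, 1} \<and> card M = r
                 \<and> 1 \<le> card {g \<in> M. fst g = 0} \<and> card {g \<in> M. fst g = 0} \<le> r - 1"
    and "bicoeff \<chi> J K \<noteq> 0"
  shows "finite J \<and> finite K \<and> J \<noteq> {} \<and> K \<noteq> {} \<and> card J + card K = r"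
  using bidegree_support[OF bideg, of "bimon J K"] assms(2) unfolding bicoeff_def bimon_layers by blast

lemma ext_map_at:
  assumes fin: "finite (ext_supp \<chi>)"
    and bip: "\<And>M. M \<in> ext_supp \<chi> \<Longrightarrow> fst ` M \<subseteq> {0, 1} \<and> finite (layer 0 M) \<and> finite (layer 1 M)"
    and val: "\<And>J K. finite J \<Longrightarrow> finite K \<Longrightarrow>
               ext_subst \<sigma> (bimon J K) N = (if J = A \<and> K = B then s else 0)"
  shows "ext_map \<sigma> \<chi> N = \<chi> (bimon A B) * of_int s"
proof -
  have "\<chi> M * of_int (ext_subst \<sigma> M N) = (if M = bimon A B then \<chi> M * of_int s else 0)"
    if M: "M \<in> ext_supp \<chi>" for M
  proof -
    have M_eq: "M = bimon (layer 0 M) (layer 1 M)" using bip[OF M] bimon_decompose by blast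
    have "ext_subst \<sigma> M N = (if layer 0 M = A \<and> layer 1 M = B then s else 0)"
      using val[of "layer 0 M" "layer 1 M"] bip[OF M] M_eq by metis
    moreover have "(layer 0 M = A \<and> layer 1 M = B) = (M = bimon A B)"
      using M_eq by (metis bimon_layers)
    ultimately show ?thesis by simp
  qed
  hence "ext_map \<sigma> \<chi> N = (\<Sum>M\<in>ext_supp \<chi>. if M = bimon A B then \<chi> M * of_int s else 0)"
    unfolding ext_map_def by (rule sum.cong[OF refl])
  also have "\<dots> = \<chi> (bimon A B) * of_int s"
    using fin by (simp add: sum.delta ext_supp_def)
  finally show ?thesis .
qed

lemma cocycle_relation:
  assumes fin: "finite (ext_supp \<chi>)"
    and bip: "\<And>M. M \<in> ext_supp \<chi> \<Longrightarrow> fst ` M \<subseteq> {0, 1} \<and> finite (layer 0 M) \<and> finite (layer 1 M)"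
    and eq: "(\<lambda>N. alpha_map \<chi> N + beta_map \<chi> N) = (\<lambda>N. gamma_map \<chi> N + delta_map \<chi> N)"
    and XYZ: "X \<noteq> {}" "Z \<noteq> {}"
  shows "bicoeff \<chi> (X \<union> Y) Z * of_int (ext_sign X Y) = bicoeff \<chi> X (Y \<union> Z) * of_int (ext_sign Y Z)"
proof -
  let ?N = "trimon X Y Z"
  have "ext_subst sig_alpha (bimon J K) ?N = (if J = {} \<and> K = {} then 0 else 0)"
    if "finite J" "finite K" for J K
    using eval_alpha[OF that XYZ(2)] by simp
  from ext_map_at[OF fin bip this] have "alpha_map \<chi> ?N = 0" by (simp add: alpha_map_def)
  moreover have "ext_subst sig_delta (bimon J K) ?N = (if J = {} \<and> K = {} then 0 else 0)"
    if "finite J" "finite K" for J K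
    using eval_delta[OF that XYZ(1)] by simp
  from ext_map_at[OF fin bip this] have "delta_map \<chi> ?N = 0" by (simp add: delta_map_def)
  moreover have "beta_map \<chi> ?N = bicoeff \<chi> (X \<union> Y) Z * of_int (ext_sign X Y)"
    unfolding beta_map_def bicoeff_def by (rule ext_map_at[OF fin bip]) (blast, rule eval_beta)
  moreover have "gamma_map \<chi> ?N = bicoeff \<chi> X (Y \<union> Z) * of_int (ext_sign Y Z)"
    unfolding gamma_map_def bicoeff_def by (rule ext_map_at[OF fin bip]) (blast, rule eval_gamma)
  ultimately show ?thesis using fun_cong[OF eq, of ?N] by simp
qed

lemma SI_minus_eval:
  assumes I: "finite I" "I \<noteq> {}"
  shows "SI_minus I N = (if fst ` N \<subseteq> {0, 1} \<and> layer 0 N \<noteq> {} \<and> layer 1 N \<noteq> {}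
                             \<and> layer 0 N \<union> layer 1 N = I
                         then ext_sign (layer 0 N) (layer 1 N) else 0)"
proof -
  have covers: "covers 0 1 {} I N = (fst ` N \<subseteq> {0, 1} \<and> layer 0 N \<union> layer 1 N = I)" by auto
  have w: "w_mon I N = (if N = Pair 0 ` I then 1 else 0)" "w'_mon I N = (if N = Pair 1 ` I then 1 else 0)"
    by (simp_all add: w_mon_def w'_mon_def)
  show ?thesis
  proof (cases "fst ` N \<subseteq> {0, 1} \<and> layer 0 N \<union> layer 1 N = I")
    case True
    hence N: "N = bimon (layer 0 N) (layer 1 N)" using bimon_decompose by blast
    consider "layer 0 N = {}" | "layer 1 N = {}" | "layer 0 N \<noteq> {}" "layer 1 N \<noteq> {}" by blast
    thus ?thesis
    proof cases
      case 1
      hence "N = Pair 1 ` I" "N \<noteq> Pair 0 ` I" using N True I(2) by auto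
      moreover have "ext_sign (layer 0 N) (layer 1 N) = 1" using 1 by (intro ext_sign_ordered) simp
      ultimately show ?thesis using 1 True unfolding SI_minus_def S_mon_eval[OF I(1)] covers w by simp
    next
      case 2
      hence "N = Pair 0 ` I" "N \<noteq> Pair 1 ` I" using N True I(2) by auto
      moreover have "ext_sign (layer 0 N) (layer 1 N) = 1" using 2 by (intro ext_sign_ordered) simp
      ultimately show ?thesis using 2 True unfolding SI_minus_def S_mon_eval[OF I(1)] covers w by simp
    next
      case 3
      hence "N \<noteq> Pair 0 ` I" "N \<noteq> Pair 1 ` I" by auto
      thus ?thesis using 3 True unfolding SI_minus_def S_mon_eval[OF I(1)] covers w by simp
    qed
  next
    case False
    hence "N \<noteq> Pair 0 ` I" "N \<noteq> Pair 1 ` I" by auto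
    thus ?thesis using False unfolding SI_minus_def S_mon_eval[OF I(1)] covers w by auto
  qed
qed

lemma SI_minus_combination:
  assumes fin: "finite (ext_supp b)" and nonempty: "\<And>I. I \<in> ext_supp b \<Longrightarrow> finite I \<and> I \<noteq> {}"
  shows "(\<Sum>I\<in>ext_supp b. b I * of_int (SI_minus I N))
       = (if fst ` N \<subseteq> {0, 1} \<and> layer 0 N \<noteq> {} \<and> layer 1 N \<noteq> {}
          then b (layer 0 N \<union> layer 1 N) * of_int (ext_sign (layer 0 N) (layer 1 N)) else 0)"
    (is "_ = (if ?P then ?v else 0)")
proof -
  have "(\<Sum>I\<in>ext_supp b. b I * of_int (SI_minus I N))
      = (\<Sum>I\<in>ext_supp b. if I = layer 0 N \<union> layer 1 N then (if ?P then ?v else 0) else 0)"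
    by (rule sum.cong) (auto simp: SI_minus_eval nonempty)
  also have "\<dots> = (if layer 0 N \<union> layer 1 N \<in> ext_supp b then (if ?P then ?v else 0) else 0)"
    using fin by (rule sum.delta)
  also have "\<dots> = (if ?P then ?v else 0)"
    by (cases "layer 0 N \<union> layer 1 N \<in> ext_supp b") (simp_all add: ext_supp_def)
  finally show ?thesis .
qed

(* The representative of a cocycle built from chi has finite support: a set I in it is the
   set of indices of the monomial w_{Min I} w'_{I - Min I} in the support of chi. *)
lemma cocycle_rep_support_finite:
  assumes fin: "finite (ext_supp \<chi>)" and r: "1 \<le> r"
  shows "finite (ext_supp (cocycle_rep (bicoeff \<chi>) r))"
proof (rule finite_subset[OF _ finite_imageI[OF fin]])
  show "ext_supp (cocycle_rep (bicoeff \<chi>) r) \<subseteq> (\<lambda>M. snd ` M) ` ext_supp \<chi>"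
  proof
    fix I assume "I \<in> ext_supp (cocycle_rep (bicoeff \<chi>) r)"
    hence I: "finite I" "card I = r" "bicoeff \<chi> {Min I} (I - {Min I}) \<noteq> 0"
      using cocycle_rep_nonzero by (auto simp: ext_supp_def)
    hence "Min I \<in> I" using r by (intro Min_in) auto
    hence "I = snd ` bimon {Min I} (I - {Min I})" by (auto simp: image_Un image_image)
    moreover have "bimon {Min I} (I - {Min I}) \<in> ext_supp \<chi>"
      using I(3) by (simp add: bicoeff_def ext_supp_def)
    ultimately show "I \<in> (\<lambda>M. snd ` M) ` ext_supp \<chi>" by (rule image_eqI)
  qed
qed

(* The main theorem. *)
theorem mainTheorem8:
  fixes \<chi> :: "(nat \<times> 'i::linorder) set \<Rightarrow> 'b::ring_1"
    and r :: nat
  assumes rational: "\<forall>n::nat. n > 0 \<longrightarrow> (\<exists>y::'b. of_nat n * y = 1 \<and> y * of_nat n = 1)"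
    and r3: "r \<ge> 3"
    and fin: "finite (ext_supp \<chi>)"
    and bideg: "\<forall>M \<in> ext_supp \<chi>. finite M \<and> fst ` M \<subseteq> {0, 1} \<and> card M = r
                 \<and> 1 \<le> card {g \<in> M. fst g = 0} \<and> card {g \<in> M. fst g = 0} \<le> r - 1"
    and eq: "(\<lambda>N. alpha_map \<chi> N + beta_map \<chi> N) = (\<lambda>N. gamma_map \<chi> N + delta_map \<chi> N)"
  shows "\<exists>b :: 'i set \<Rightarrow> 'b. finite (ext_supp b)
           \<and> (\<forall>I \<in> ext_supp b. finite I \<and> card I = r)
           \<and> \<chi> = (\<lambda>N. \<Sum>I \<in> ext_supp b. b I * of_int (SI_minus I N))"
proof -
  have bip: "fst ` M \<subseteq> {0, 1} \<and> finite (layer 0 M) \<and> finite (layer 1 M)" if "M \<in> ext_supp \<chi>" for M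
    using bidegree_support[OF bideg] that by (simp add: ext_supp_def)
  interpret shuffle_cocycle "bicoeff \<chi>" r
    using r3 cocycle_relation[OF fin bip eq] bicoeff_support[OF bideg] by unfold_locales auto
  define b where "b = cocycle_rep (bicoeff \<chi>) r"
  have b_supp: "\<forall>I \<in> ext_supp b. finite I \<and> card I = r"
    using cocycle_rep_nonzero unfolding b_def ext_supp_def by blast
  have b_fin: "finite (ext_supp b)"
    unfolding b_def using cocycle_rep_support_finite[OF fin] r3 by simp
  have b_nonempty: "finite I \<and> I \<noteq> {}" if "I \<in> ext_supp b" for I
    using b_supp that r3 by auto
  have "\<chi> N = (\<Sum>I \<in> ext_supp b. b I * of_int (SI_minus I N))" for N
  proof -
    have "\<chi> N = (if fst ` N \<subseteq> {0, 1} \<and> layer 0 N \<noteq> {} \<and> layer 1 N \<noteq> {}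
                   then bicoeff \<chi> (layer 0 N) (layer 1 N) else 0)"
      by (rule bidegree_expansion[OF bideg])
    also have "\<dots> = (if fst ` N \<subseteq> {0, 1} \<and> layer 0 N \<noteq> {} \<and> layer 1 N \<noteq> {}
                   then b (layer 0 N \<union> layer 1 N) * of_int (ext_sign (layer 0 N) (layer 1 N)) else 0)"
      unfolding b_def by (simp add: coeff_formula cong: if_cong)
    also have "\<dots> = (\<Sum>I \<in> ext_supp b. b I * of_int (SI_minus I N))"
      by (rule SI_minus_combination[OF b_fin b_nonempty, symmetric])
    finally show ?thesis .
  qed
  thus ?thesis using b_fin b_supp by blast
qed

end
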